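(* Assume $\mathsf{CH}$. There is a $\mathcal{Z}$-MAD family (a MAD family $\mathcal{A}$ with $\mathcal{I}(\mathcal{A})\not\le_K\mathcal{Z}$) that is not Shelah–Stepr\={a}ns for block sequences.
   Context: $\mathcal{Z}=\{A\subseteq\omega:\lim_n|A\cap 2^n|/2^n=0\}$. A MAD family is a maximal family of infinite subsets of $\omega$ with pairwise finite intersections; $\mathcal{I}(\mathcal{A})$ is the ideal generated by $\mathcal{A}$ and finite sets. $\mathcal{I}\le_K\mathcal{J}$ (ideals on $\omega$) means there is $f:\omega\to\omega$ with $f^{-1}(A)\in\mathcal{J}$ for all $A\in\mathcal{I}$. For an ideal $\mathcal{I}$, $(\mathcal{I}^{<\omega})^+$ is the set of $X\subseteq[\omega]^{<\omega}\setminus\{\emptyset\}$ such that every $A\in\mathcal{I}$ is disjoint from some $s\in X$. A block sequence is $\{s_n:n\in\omega\}$ of nonempty finite subsets of $\omega$ with $\max s_n<\min s_{n+1}$. $\mathcal{A}$ is Shelah–Stepr\={a}ns for block sequences if for every block sequence $\{s_n\}\in(\mathcal{I}(\mathcal{A})^{<\omega})^+$ there is an infinite $W\subseteq\omega$ with $\bigcup_{n\in W}s_n\in\mathcal{I}(\mathcal{A})$. *)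

theory Defs
  imports Complex_Main "HOL-Library.Equipollence" "HOL-Library.Countable_Set"
begin

definition CH :: bool where
  "CH \<longleftrightarrow> (\<forall>X :: nat set set. countable X \<or> X \<approx> (UNIV :: nat set set))"

definition Zideal :: "nat set set" where
  "Zideal = {A. (\<lambda>n. real (card (A \<inter> {..<2^n})) / 2^n) \<longlonglongrightarrow> 0}"

definition almost_disjoint_family :: "nat set set \<Rightarrow> bool" where
  "almost_disjoint_family \<A> \<longleftrightarrow>
     (\<forall>X\<in>\<A>. infinite X) \<and> (\<forall>X\<in>\<A>. \<forall>Y\<in>\<A>. X \<noteq> Y \<longrightarrow> finite (X \<inter> Y))"

definition MAD :: "nat set set \<Rightarrow> bool" where
  "MAD \<A> \<longleftrightarrow> almost_disjoint_family \<A> \<and>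
     (\<forall>\<B>. almost_disjoint_family \<B> \<and> \<A> \<subseteq> \<B> \<longrightarrow> \<B> = \<A>)"

definition gen_ideal :: "nat set set \<Rightarrow> nat set set" where
  "gen_ideal \<A> = {X. \<exists>F. finite F \<and> F \<subseteq> \<A> \<and> finite (X - \<Union>F)}"

definition katetov_le :: "nat set set \<Rightarrow> nat set set \<Rightarrow> bool" where
  "katetov_le I J \<longleftrightarrow> (\<exists>f :: nat \<Rightarrow> nat. \<forall>A\<in>I. f -` A \<in> J)"

definition block_sequence :: "(nat \<Rightarrow> nat set) \<Rightarrow> bool" where
  "block_sequence s \<longleftrightarrow> (\<forall>n. finite (s n) \<and> s n \<noteq> {}) \<and> (\<forall>n. Max (s n) < Min (s (Suc n)))"

text \<open>Membership of a family of nonempty finite sets in (I^{<omega})^+.\<close>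
definition fin_positive :: "nat set set \<Rightarrow> nat set set \<Rightarrow> bool" where
  "fin_positive I X \<longleftrightarrow> (\<forall>s\<in>X. finite s \<and> s \<noteq> {}) \<and> (\<forall>A\<in>I. \<exists>s\<in>X. A \<inter> s = {})"

definition SS_block :: "nat set set \<Rightarrow> bool" where
  "SS_block \<A> \<longleftrightarrow> (\<forall>s. block_sequence s \<and> fin_positive (gen_ideal \<A>) (range s) \<longrightarrow>
       (\<exists>W. infinite W \<and> (\<Union>n\<in>W. s n) \<in> gen_ideal \<A>))"

end

theory Submission
  imports Defs
begin

(* Cut omega into the blocks I_n = [n^2, (n+1)^2). Call an almost disjoint family block-sparse
   if every finite union U of its members misses infinitely many blocks and |I_n - U| tends to
   infinity. For such a family the blocks are positive for the ideal (a set in the ideal is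
   almost contained in such a U, so it misses one of the blocks missed by U), while no infinite
   union of blocks lies in the ideal (it would be almost covered by such a U, which leaves a
   point of almost every block uncovered); so the family is not Shelah-Steprans for block
   sequences.

   Under CH the subsets of omega carry a well-founded total order with countable initial
   segments, and every set X and every function f (through a code) owns a stage.
   At a stage the family built so far is countable and block-sparse; it is extended by a subset
   of X if X is almost disjoint from all members, and by a set A with f^-1[A] not in Z if no
   member has this property. The union is then MAD and its ideal is not Katetov below Z.
   The new set is a union of finite pieces P_k placed strictly between two blocks I_(n_k) and
   I_(n_(k+1)) that avoid the first k members, each P_k leaving at least k free points in every
   block it meets; this keeps the family block-sparse. For the Katetov requirement each piece
   is chosen with f-preimage of density at least 1/4 at some dyadic level beyond k. *)

section \<open>Blocks\<close>

definition block :: "nat \<Rightarrow> nat set" where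
  "block n = {n\<^sup>2..<(Suc n)\<^sup>2}"

lemma self_le_power2: "n \<le> (n::nat)\<^sup>2"
  by (simp add: power2_eq_square le_square)

lemma finite_block [simp]: "finite (block n)"
  by (simp add: block_def)

lemma card_block: "card (block n) = 2 * n + 1"
  by (simp add: block_def power2_eq_square)

lemma square_mem_block: "n\<^sup>2 \<in> block n"
  by (simp add: block_def power_strict_mono)

lemma block_nonempty: "block n \<noteq> {}"
  using square_mem_block by blast

lemma mem_block_lower: "x \<in> block n \<Longrightarrow> a\<^sup>2 \<le> x \<Longrightarrow> a \<le> n"
  unfolding block_def using power_less_imp_less_base[of a 2 "Suc n"] by simp

lemma mem_block_upper: "x \<in> block n \<Longrightarrow> x < b\<^sup>2 \<Longrightarrow> n < b"
  unfolding block_def using power_less_imp_less_base[of n 2 b] by simp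

lemma block_unique: "x \<in> block n \<Longrightarrow> x \<in> block n' \<Longrightarrow> n = n'"
  by (metis antisym block_def atLeastLessThan_iff mem_block_lower)

lemma le_of_mem_block: "x \<in> block n \<Longrightarrow> n \<le> x"
  unfolding block_def using self_le_power2[of n] by simp

lemma finite_blocks_meeting: "finite G \<Longrightarrow> finite {n. block n \<inter> G \<noteq> {}}"
  by (rule finite_subset[of _ "{..Max G}"]) (auto dest: le_of_mem_block intro: le_trans)

lemma block_sequence_block: "block_sequence block"
  unfolding block_sequence_def
proof (intro conjI allI)
  fix n
  have "Max (block n) < (Suc n)\<^sup>2" "(Suc n)\<^sup>2 \<le> Min (block (Suc n))"
    using Max_in[of "block n"] Min_in[of "block (Suc n)"] block_nonempty
    by (auto simp: block_def)
  then show "Max (block n) < Min (block (Suc n))" by linarith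
qed (auto simp: block_nonempty)

section \<open>Dyadic density\<close>

definition dens :: "nat set \<Rightarrow> nat \<Rightarrow> real" where
  "dens A N = card (A \<inter> {..<2 ^ N}) / 2 ^ N"

lemma Zideal_iff_dens: "A \<in> Zideal \<longleftrightarrow> (\<lambda>N. dens A N) \<longlonglongrightarrow> 0"
  by (simp add: Zideal_def dens_def)

lemma dens_nonneg: "0 \<le> dens A N"
  by (simp add: dens_def)

lemma dens_mono: "A \<subseteq> B \<Longrightarrow> dens A N \<le> dens B N"
  unfolding dens_def by (intro divide_right_mono) (auto intro: card_mono)

lemma dens_Un_disjoint: "A \<inter> B = {} \<Longrightarrow> dens (A \<union> B) N = dens A N + dens B N"
  unfolding dens_def Int_Un_distrib2
  by (subst card_Un_disjoint) (auto simp: add_divide_distrib)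

lemma dens_Un_le: "dens (A \<union> B) N \<le> dens A N + dens B N"
  using dens_Un_disjoint[of A "B - A" N] dens_mono[of "B - A" B N] by simp

lemma dens_Compl: "dens (- A) N = 1 - dens A N"
  using dens_Un_disjoint[of A "- A" N] by (simp add: dens_def)

lemma Zideal_subset: "B \<in> Zideal \<Longrightarrow> A \<subseteq> B \<Longrightarrow> A \<in> Zideal"
  unfolding Zideal_iff_dens
  by (rule tendsto_sandwich[of "\<lambda>_. 0" _ _ "\<lambda>N. dens B N"]) (auto simp: dens_nonneg dens_mono)

lemma Zideal_Un: "A \<in> Zideal \<Longrightarrow> B \<in> Zideal \<Longrightarrow> A \<union> B \<in> Zideal"
  unfolding Zideal_iff_dens
  by (rule tendsto_sandwich[of "\<lambda>_. 0" _ _ "\<lambda>N. dens A N + dens B N"])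
    (auto simp: dens_nonneg dens_Un_le intro: tendsto_add_zero)

lemma Zideal_UN: "finite F \<Longrightarrow> (\<And>A. A \<in> F \<Longrightarrow> g A \<in> Zideal) \<Longrightarrow> (\<Union>A\<in>F. g A) \<in> Zideal"
proof (induction F rule: finite_induct)
  case empty
  then show ?case by (simp add: Zideal_def)
qed (simp add: Zideal_Un)

lemma Zideal_ex_small_dens:
  assumes "A \<in> Zideal" "c > 0"
  shows "\<exists>N\<ge>k. dens A N < c"
proof -
  have "\<forall>\<^sub>F N in sequentially. dens A N < c"
    using assms unfolding Zideal_iff_dens by (rule order_tendstoD(2))
  then have "\<forall>\<^sub>F N in sequentially. k \<le> N \<and> dens A N < c"
    using eventually_ge_at_top by (rule eventually_conj[rotated])
  then show ?thesis
    using eventually_happens'[OF sequentially_bot] by blast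
qed

lemma not_in_Zideal_if_frequently_dens_ge:
  assumes "c > 0" "\<exists>\<^sub>F N in sequentially. c \<le> dens A N"
  shows "A \<notin> Zideal"
proof
  assume "A \<in> Zideal"
  then have "\<forall>\<^sub>F N in sequentially. dens A N < c"
    using assms(1) by (auto simp: Zideal_iff_dens intro: order_tendstoD(2))
  then show False
    using assms(2) by (simp add: frequently_def not_le)
qed

section \<open>Block-sparse families\<close>

definition block_sparse :: "nat set \<Rightarrow> bool" where
  "block_sparse U \<longleftrightarrow>
     infinite {n. block n \<inter> U = {}} \<and> (\<forall>k. \<forall>\<^sub>F n in sequentially. k \<le> card (block n - U))"

lemma block_sparse_empty: "block_sparse {}"
proof -
  have "\<forall>n\<ge>k. k \<le> card (block n - {})" for k
    by (simp add: card_block)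
  then show ?thesis
    by (auto simp: block_sparse_def eventually_sequentially)
qed

lemma block_sparse_subset:
  assumes "block_sparse V" "U \<subseteq> V"
  shows "block_sparse U"
proof -
  have "{n. block n \<inter> V = {}} \<subseteq> {n. block n \<inter> U = {}}"
    using assms(2) by blast
  moreover have "card (block n - V) \<le> card (block n - U)" for n
    using assms(2) by (intro card_mono) auto
  ultimately show ?thesis
    using assms(1) unfolding block_sparse_def
    by (metis (mono_tags, lifting) infinite_super eventually_mono le_trans)
qed

lemma block_sparse_Un_finite:
  assumes "block_sparse U" "finite G"
  shows "block_sparse (U \<union> G)"
proof -
  have "finite {n. block n \<inter> G \<noteq> {}}"
    using finite_blocks_meeting[OF assms(2)] .
  then have avoid: "\<forall>\<^sub>F n in sequentially. block n \<inter> G = {}"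
    by (simp add: eventually_cofinite[symmetric] cofinite_eq_sequentially)
  have "{n. block n \<inter> U = {}} - {n. block n \<inter> G \<noteq> {}} \<subseteq> {n. block n \<inter> (U \<union> G) = {}}"
    by blast
  then have "infinite {n. block n \<inter> (U \<union> G) = {}}"
    using assms(1) \<open>finite {n. block n \<inter> G \<noteq> {}}\<close>
    unfolding block_sparse_def by (meson Diff_infinite_finite infinite_super)
  moreover have "\<forall>\<^sub>F n in sequentially. k \<le> card (block n - (U \<union> G))" for k
    using eventually_conj[OF avoid assms(1)[unfolded block_sparse_def, THEN conjunct2, rule_format, of k]]
  proof eventually_elim
    case (elim n)
    then have "block n - (U \<union> G) = block n - U" by blast
    then show ?case using elim by simp
  qed
  ultimately show ?thesis
    by (simp add: block_sparse_def)
qed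

lemma infinite_Compl_if_block_sparse:
  assumes "block_sparse U"
  shows "infinite (- U)"
proof -
  have "(\<lambda>n. n\<^sup>2) ` {n. block n \<inter> U = {}} \<subseteq> - U"
    using square_mem_block by blast
  moreover have "inj (\<lambda>n::nat. n\<^sup>2)"
    by (rule strict_mono_imp_inj_on) (simp add: strict_mono_def power_strict_mono)
  ultimately show ?thesis
    using assms unfolding block_sparse_def by (meson finite_imageD infinite_super inj_on_subset subset_UNIV)
qed

definition block_sparse_family :: "nat set set \<Rightarrow> bool" where
  "block_sparse_family C \<longleftrightarrow>
     almost_disjoint_family C \<and> (\<forall>F. finite F \<and> F \<subseteq> C \<longrightarrow> block_sparse (\<Union>F))"

lemma block_sparse_family_Union_chain:
  assumes "chain\<^sub>\<subseteq> \<C>" "\<And>C. C \<in> \<C> \<Longrightarrow> block_sparse_family C"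
  shows "block_sparse_family (\<Union>\<C>)"
proof -
  have in_member: "\<exists>C\<in>\<C>. F \<subseteq> C" if "finite F" "F \<subseteq> \<Union>\<C>" "F \<noteq> {}" for F
    using finite_subset_Union_chain[OF that(1,2)] that(2,3) assms(1)
    by (metis Union_empty chain_subset_alt_def subset_empty)
  have "almost_disjoint_family (\<Union>\<C>)"
    unfolding almost_disjoint_family_def
  proof (intro conjI ballI impI)
    fix X Y assume "X \<in> \<Union>\<C>" "Y \<in> \<Union>\<C>" "X \<noteq> Y"
    then obtain C where "C \<in> \<C>" "{X, Y} \<subseteq> C" using in_member[of "{X, Y}"] by auto
    then show "finite (X \<inter> Y)"
      using assms(2) \<open>X \<noteq> Y\<close> by (auto simp: block_sparse_family_def almost_disjoint_family_def)
  next
    fix X assume "X \<in> \<Union>\<C>"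
    then show "infinite X"
      using assms(2) by (auto simp: block_sparse_family_def almost_disjoint_family_def)
  qed
  moreover have "block_sparse (\<Union>F)" if F: "finite F" "F \<subseteq> \<Union>\<C>" for F
  proof (cases "F = {}")
    case True
    then show ?thesis by (simp add: block_sparse_empty)
  next
    case False
    then obtain C where "C \<in> \<C>" "F \<subseteq> C" using in_member[OF F False] by blast
    then show ?thesis
      using assms(2) F(1) by (simp add: block_sparse_family_def)
  qed
  ultimately show ?thesis
    by (simp add: block_sparse_family_def)
qed

definition exhausts :: "(nat \<Rightarrow> nat set) \<Rightarrow> nat set set \<Rightarrow> bool" where
  "exhausts U C \<longleftrightarrow> mono U \<and> (\<forall>m. \<exists>F. finite F \<and> F \<subseteq> C \<and> U m = \<Union>F)
     \<and> (\<forall>F. finite F \<and> F \<subseteq> C \<longrightarrow> (\<exists>m. \<Union>F \<subseteq> U m))"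

lemma countable_imp_exhausts:
  assumes "countable C"
  shows "\<exists>U. exhausts U C"
proof -
  define U where "U m = \<Union>{A\<in>C. to_nat_on C A \<le> m}" for m
  have "mono U"
    by (intro monoI) (auto simp: U_def)
  moreover have "\<forall>m. \<exists>F. finite F \<and> F \<subseteq> C \<and> U m = \<Union>F"
  proof (intro allI exI conjI)
    fix m :: nat
    have "{A\<in>C. to_nat_on C A \<le> m} = to_nat_on C -` {..m} \<inter> C" by auto
    then show "finite {A\<in>C. to_nat_on C A \<le> m}"
      using finite_vimage_IntI[OF finite_atMost inj_on_to_nat_on[OF assms]] by simp
  qed (auto simp: U_def)
  moreover have "\<exists>m. \<Union>F \<subseteq> U m" if F: "finite F" "F \<subseteq> C" for F
  proof (intro exI)
    have "to_nat_on C A \<le> (\<Sum>B\<in>F. to_nat_on C B)" if "A \<in> F" for A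
      using that F(1) by (simp add: member_le_sum)
    then show "\<Union>F \<subseteq> U (\<Sum>A\<in>F. to_nat_on C A)"
      using F(2) by (auto simp: U_def)
  qed
  ultimately have "exhausts U C"
    unfolding exhausts_def by simp
  then show ?thesis by blast
qed

lemma exhausts_block_sparse:
  assumes "block_sparse_family C" "exhausts U C"
  shows "block_sparse (U m)"
proof -
  obtain F where "finite F" "F \<subseteq> C" "U m = \<Union>F"
    using assms(2) unfolding exhausts_def by blast
  then show ?thesis
    using assms(1) unfolding block_sparse_family_def by simp
qed

lemma exhausts_vimage_Zideal:
  assumes "exhausts U C" "\<And>A. A \<in> C \<Longrightarrow> f -` A \<in> Zideal"
  shows "f -` U m \<in> Zideal"
proof -
  obtain F where "finite F" "F \<subseteq> C" "U m = \<Union>F"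
    using assms(1) unfolding exhausts_def by blast
  moreover have "(\<Union>A\<in>F. f -` A) \<in> Zideal"
    using calculation assms(2) by (intro Zideal_UN) auto
  ultimately show ?thesis
    by (simp add: vimage_Union)
qed

lemma exhausts_infinite_Diff:
  assumes "exhausts U C" "infinite X" "\<And>A. A \<in> C \<Longrightarrow> finite (X \<inter> A)"
  shows "infinite (X - U m)"
proof -
  obtain F where F: "finite F" "F \<subseteq> C" "U m = \<Union>F"
    using assms(1) unfolding exhausts_def by blast
  have "finite (\<Union>A\<in>F. X \<inter> A)"
    using F(1,2) assms(3) by (intro finite_UN_I) auto
  moreover have "X \<inter> U m \<subseteq> (\<Union>A\<in>F. X \<inter> A)"
    using F(3) by blast
  ultimately have "infinite (X - X \<inter> U m)"
    using assms(2) by (meson Diff_infinite_finite finite_subset)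
  moreover have "X - X \<inter> U m \<subseteq> X - U m"
    by blast
  ultimately show ?thesis
    by (rule infinite_super[rotated])
qed

definition sparse_extension :: "(nat \<Rightarrow> nat set) \<Rightarrow> nat set \<Rightarrow> bool" where
  "sparse_extension U Y \<longleftrightarrow>
     infinite Y \<and> (\<forall>i. finite (Y \<inter> U i)) \<and> (\<forall>m. block_sparse (Y \<union> U m))"

lemma sparse_extension_Un_finite:
  assumes "sparse_extension U Y" "finite G"
  shows "sparse_extension U (Y \<union> G)"
proof -
  have "(Y \<union> G) \<union> U m = (Y \<union> U m) \<union> G" for m
    by blast
  then show ?thesis
    using assms by (auto simp: sparse_extension_def Int_Un_distrib2 block_sparse_Un_finite)
qed

lemma block_sparse_family_insert:
  assumes C: "block_sparse_family C" and U: "exhausts U C" and Y: "sparse_extension U Y"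
  shows "block_sparse_family (insert Y C)"
proof -
  have covered: "\<exists>m. \<Union>F \<subseteq> U m" if "finite F" "F \<subseteq> C" for F
    using U that unfolding exhausts_def by blast
  have "finite (Y \<inter> A)" if A: "A \<in> C" for A
  proof -
    obtain m where "A \<subseteq> U m" using covered[of "{A}"] A by auto
    then show ?thesis
      using Y unfolding sparse_extension_def by (meson Int_mono finite_subset order_refl)
  qed
  moreover have "almost_disjoint_family C" "infinite Y"
    using C Y by (simp_all add: block_sparse_family_def sparse_extension_def)
  ultimately have "almost_disjoint_family (insert Y C)"
    unfolding almost_disjoint_family_def by (metis Int_commute insert_iff)
  moreover have "block_sparse (\<Union>F)" if F: "finite F" "F \<subseteq> insert Y C" for F
  proof -
    obtain m where "\<Union>(F - {Y}) \<subseteq> U m"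
      using covered[of "F - {Y}"] F by blast
    then have "\<Union>F \<subseteq> Y \<union> U m" by blast
    then show ?thesis
      using Y block_sparse_subset unfolding sparse_extension_def by blast
  qed
  ultimately show ?thesis
    by (simp add: block_sparse_family_def)
qed

section \<open>Assembling a new member from finite pieces\<close>

definition leaves_margin :: "nat \<Rightarrow> nat set \<Rightarrow> nat set \<Rightarrow> bool" where
  "leaves_margin k U P \<longleftrightarrow> (\<forall>n. block n \<inter> P \<noteq> {} \<longrightarrow> k \<le> card (block n - (P \<union> U)))"

definition piece_above :: "nat set \<Rightarrow> nat \<Rightarrow> nat \<Rightarrow> nat set \<Rightarrow> bool" where
  "piece_above U k n P \<longleftrightarrow>
     finite P \<and> P \<noteq> {} \<and> P \<subseteq> {(Suc n)\<^sup>2..} \<and> P \<inter> U = {} \<and> leaves_margin k U P"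

lemma exists_windows:
  fixes U :: "nat \<Rightarrow> nat set" and pc :: "nat \<Rightarrow> nat \<Rightarrow> nat set"
  assumes free: "\<And>k. infinite {n. block n \<inter> U k = {}}"
    and cond: "\<And>k. \<forall>\<^sub>F n in sequentially. Cond k n"
    and fin: "\<And>k n. Cond k n \<Longrightarrow> finite (pc k n)"
  obtains ns where "strict_mono ns"
    "\<forall>k. block (ns k) \<inter> U k = {} \<and> Cond k (ns k) \<and> pc k (ns k) \<subseteq> {..<(ns (Suc k))\<^sup>2}"
proof -
  have good: "\<exists>n\<ge>b. block n \<inter> U k = {} \<and> Cond k n" for k b
  proof -
    have "\<exists>\<^sub>F n in sequentially. block n \<inter> U k = {}"
      using free[of k] by (simp add: frequently_cofinite cofinite_eq_sequentially[symmetric])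
    then have "\<exists>\<^sub>F n in sequentially. Cond k n \<and> block n \<inter> U k = {}"
      using cond by (rule frequently_eventually_conj)
    then show ?thesis
      by (auto simp: frequently_sequentially)
  qed
  have "\<exists>ns. \<forall>k. (block (ns k) \<inter> U k = {} \<and> Cond k (ns k))
      \<and> (ns k < ns (Suc k) \<and> pc k (ns k) \<subseteq> {..<(ns (Suc k))\<^sup>2})"
  proof (rule dependent_nat_choice)
    show "\<exists>n. block n \<inter> U 0 = {} \<and> Cond 0 n"
      using good by blast
  next
    fix n k
    assume "block n \<inter> U k = {} \<and> Cond k n"
    then have "finite (pc k n)"
      using fin by blast
    define b where "b = Suc (n + Max (insert 0 (pc k n)))"
    obtain n' where n': "n' \<ge> b" "block n' \<inter> U (Suc k) = {}" "Cond (Suc k) n'"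
      using good by blast
    have "z < n'\<^sup>2" if "z \<in> pc k n" for z
    proof -
      have "z \<le> Max (insert 0 (pc k n))"
        using \<open>finite (pc k n)\<close> that by (intro Max_ge) auto
      then have "z < b"
        by (simp add: b_def)
      also have "b \<le> n'\<^sup>2"
        using n'(1) self_le_power2[of n'] by linarith
      finally show ?thesis .
    qed
    moreover have "n < n'"
      using n'(1) by (simp add: b_def)
    ultimately show "\<exists>n'. (block n' \<inter> U (Suc k) = {} \<and> Cond (Suc k) n')
        \<and> n < n' \<and> pc k n \<subseteq> {..<n'\<^sup>2}"
      using n' by blast
  qed
  then show ?thesis
    using that by (auto simp: strict_mono_Suc_iff)
qed

locale piece_sequence =
  fixes U :: "nat \<Rightarrow> nat set" and ns :: "nat \<Rightarrow> nat" and P :: "nat \<Rightarrow> nat set"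
  assumes mono_U: "mono U"
    and block_sparse_U: "\<And>m. block_sparse (U m)"
    and strict_mono_ns: "strict_mono ns"
    and free_block: "\<And>k. block (ns k) \<inter> U k = {}"
    and piece: "\<And>k. piece_above (U k) k (ns k) (P k)"
    and below_next: "\<And>k. P k \<subseteq> {..<(ns (Suc k))\<^sup>2}"
begin

lemma block_meets_piece:
  assumes "block n \<inter> P k \<noteq> {}"
  shows "ns k < n" "n < ns (Suc k)"
proof -
  obtain x where x: "x \<in> block n" "x \<in> P k"
    using assms by blast
  then have "(Suc (ns k))\<^sup>2 \<le> x" "x < (ns (Suc k))\<^sup>2"
    using piece[of k] below_next[of k] by (auto simp: piece_above_def)
  then show "ns k < n" "n < ns (Suc k)"
    using mem_block_lower[OF x(1), of "Suc (ns k)"] mem_block_upper[OF x(1), of "ns (Suc k)"]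
    by auto
qed

lemma block_meets_piece_unique:
  assumes "block n \<inter> P j \<noteq> {}" "block n \<inter> P k \<noteq> {}"
  shows "j = k"
proof -
  have "ns j < ns (Suc k)" "ns k < ns (Suc j)"
    using block_meets_piece[OF assms(1)] block_meets_piece[OF assms(2)] by linarith+
  then show ?thesis
    using strict_mono_ns by (simp add: strict_mono_less)
qed

lemma infinite_Union_pieces: "infinite (\<Union>k. P k)"
  unfolding infinite_nat_iff_unbounded_le
proof
  fix m
  obtain x where x: "x \<in> P m"
    using piece[of m] by (auto simp: piece_above_def)
  have "m \<le> ns m"
    using strict_mono_ns by (rule seq_suble)
  also have "\<dots> \<le> (Suc (ns m))\<^sup>2"
    using self_le_power2[of "Suc (ns m)"] by simp
  also have "\<dots> \<le> x"
    using piece[of m] x by (auto simp: piece_above_def)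
  finally show "\<exists>x\<ge>m. x \<in> (\<Union>k. P k)"
    using x by blast
qed

lemma finite_Union_pieces_Int: "finite ((\<Union>k. P k) \<inter> U i)"
proof -
  have "P k \<inter> U i = {}" if "i \<le> k" for k
    using piece[of k] monoD[OF mono_U that] by (auto simp: piece_above_def)
  then have "(\<Union>k. P k) \<inter> U i \<subseteq> (\<Union>k<i. P k)"
    by (auto simp: not_less[symmetric])
  moreover have "finite (\<Union>k<i. P k)"
    using piece by (simp add: piece_above_def)
  ultimately show ?thesis
    by (rule finite_subset)
qed

lemma infinite_free_blocks: "infinite {n. block n \<inter> ((\<Union>k. P k) \<union> U m) = {}}"
proof -
  have "block (ns k) \<inter> ((\<Union>j. P j) \<union> U m) = {}" if "m \<le> k" for k
  proof -
    have "block (ns k) \<inter> P j = {}" for j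
      using block_meets_piece[of "ns k" j] strict_mono_ns by (force simp: strict_mono_less)
    moreover have "block (ns k) \<inter> U m = {}"
      using free_block[of k] monoD[OF mono_U that] by blast
    ultimately show ?thesis
      by blast
  qed
  then have "ns ` {m..} \<subseteq> {n. block n \<inter> ((\<Union>k. P k) \<union> U m) = {}}"
    by auto
  moreover have "infinite (ns ` {m..})"
    using strict_mono_ns by (simp add: finite_image_iff strict_mono_imp_inj_on infinite_Ici)
  ultimately show ?thesis
    by (rule infinite_super)
qed

lemma card_block_Diff_Union_pieces:
  assumes "ns (max m k) < n" "k \<le> card (block n - U m)"
  shows "k \<le> card (block n - ((\<Union>j. P j) \<union> U m))"
proof (cases "block n \<inter> (\<Union>j. P j) = {}")
  case True
  then have "block n - ((\<Union>j. P j) \<union> U m) = block n - U m"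
    by blast
  then show ?thesis
    using assms(2) by simp
next
  case False
  then obtain j where j: "block n \<inter> P j \<noteq> {}"
    by blast
  have "ns (max m k) < ns (Suc j)"
    using block_meets_piece(2)[OF j] assms(1) by linarith
  then have "max m k < Suc j"
    using strict_mono_ns by (simp add: strict_mono_less)
  then have "m \<le> j" "k \<le> j"
    by auto
  have "block n - (P j \<union> U j) \<subseteq> block n - ((\<Union>j. P j) \<union> U m)"
    using block_meets_piece_unique[OF j] monoD[OF mono_U \<open>m \<le> j\<close>] by blast
  then have "card (block n - (P j \<union> U j)) \<le> card (block n - ((\<Union>j. P j) \<union> U m))"
    by (intro card_mono) auto
  moreover have "j \<le> card (block n - (P j \<union> U j))"
    using piece[of j] j by (auto simp: piece_above_def leaves_margin_def)
  ultimately show ?thesis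
    using \<open>k \<le> j\<close> by linarith
qed

lemma sparse_extension_Union_pieces: "sparse_extension U (\<Union>k. P k)"
proof -
  have "\<forall>\<^sub>F n in sequentially. k \<le> card (block n - ((\<Union>j. P j) \<union> U m))" for m k
  proof -
    have "\<forall>\<^sub>F n in sequentially. ns (max m k) < n \<and> k \<le> card (block n - U m)"
      using block_sparse_U[of m] eventually_gt_at_top[of "ns (max m k)"]
      by (auto simp: block_sparse_def intro: eventually_conj)
    then show ?thesis
      by eventually_elim (blast intro: card_block_Diff_Union_pieces)
  qed
  then show ?thesis
    by (simp add: sparse_extension_def block_sparse_def infinite_Union_pieces
        finite_Union_pieces_Int infinite_free_blocks)
qed

end

lemma exists_sparse_extension:
  fixes U :: "nat \<Rightarrow> nat set" and Q :: "nat \<Rightarrow> nat set \<Rightarrow> bool"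
  assumes "mono U" "\<And>m. block_sparse (U m)"
    and pieces: "\<And>k. \<forall>\<^sub>F n in sequentially. \<exists>P. piece_above (U k) k n P \<and> Q k P"
  obtains P where "sparse_extension U (\<Union>k. P k)" "\<And>k. Q k (P k)"
proof -
  define Cond where "Cond k n \<longleftrightarrow> (\<exists>P. piece_above (U k) k n P \<and> Q k P)" for k n
  define pc where "pc k n = (SOME P. piece_above (U k) k n P \<and> Q k P)" for k n
  have pc: "piece_above (U k) k n (pc k n) \<and> Q k (pc k n)" if "Cond k n" for k n
    using that unfolding Cond_def pc_def by (rule someI_ex)
  have "infinite {n. block n \<inter> U k = {}}" for k
    using assms(2) by (simp add: block_sparse_def)
  moreover have "\<forall>\<^sub>F n in sequentially. Cond k n" for k
    using pieces by (simp add: Cond_def)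
  moreover have "finite (pc k n)" if "Cond k n" for k n
    using pc[OF that] by (simp add: piece_above_def)
  ultimately obtain ns where ns: "strict_mono ns"
    "\<forall>k. block (ns k) \<inter> U k = {} \<and> Cond k (ns k) \<and> pc k (ns k) \<subseteq> {..<(ns (Suc k))\<^sup>2}"
    by (rule exists_windows)
  interpret piece_sequence U ns "\<lambda>k. pc k (ns k)"
    using assms(1,2) ns pc by unfold_locales auto
  show thesis
    using that sparse_extension_Union_pieces pc ns(2) by blast
qed

section \<open>Extending a countable block-sparse family\<close>

lemma singleton_piece_above:
  assumes "x \<notin> U" "(Suc n)\<^sup>2 \<le> x" "\<forall>n'>n. Suc k \<le> card (block n' - U)"
  shows "piece_above U k n {x}"
proof -
  have "k \<le> card (block n' - ({x} \<union> U))" if "x \<in> block n'" for n'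
  proof -
    have "n < n'"
      using mem_block_lower[OF that assms(2)] by simp
    then have "Suc k \<le> card (block n' - U)"
      using assms(3) by blast
    moreover have "block n' - ({x} \<union> U) = (block n' - U) - {x}" "x \<in> block n' - U"
      using that assms(1) by auto
    ultimately show ?thesis
      by simp
  qed
  then show ?thesis
    using assms(1,2) by (auto simp: piece_above_def leaves_margin_def)
qed

lemma exists_sparse_extension_inside:
  assumes "mono U" "\<And>m. block_sparse (U m)" "\<And>m. infinite (X - U m)"
  obtains Y where "sparse_extension U Y" "Y \<subseteq> X"
proof -
  have pieces: "\<forall>\<^sub>F n in sequentially. \<exists>P. piece_above (U k) k n P \<and> P \<subseteq> X" for k
  proof -
    have "\<forall>\<^sub>F n in sequentially. Suc k \<le> card (block n - U k)"
      using assms(2) by (simp add: block_sparse_def)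
    then have "\<forall>\<^sub>F n in sequentially. \<forall>n'\<ge>n. Suc k \<le> card (block n' - U k)"
      by (rule eventually_all_ge_at_top)
    then show ?thesis
    proof eventually_elim
      case (elim n)
      obtain x where "x \<in> X - U k" "(Suc n)\<^sup>2 \<le> x"
        using assms(3)[of k] unfolding infinite_nat_iff_unbounded_le by blast
      then show ?case
        using elim by (intro exI[of _ "{x}"]) (auto intro: singleton_piece_above)
    qed
  qed
  obtain P :: "nat \<Rightarrow> nat set" where "sparse_extension U (\<Union>k. P k)" "\<And>k. P k \<subseteq> X"
    using exists_sparse_extension[OF assms(1,2) pieces] by blast
  then show thesis
    using that by blast
qed

lemma obtain_subsets_with_card:
  fixes S :: "nat \<Rightarrow> 'a set"
  obtains T where "\<And>n. T n \<subseteq> S n" "\<And>n. k \<le> card (S n) \<Longrightarrow> card (T n) = k"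
proof -
  have ex_T: "\<forall>n. \<exists>T. T \<subseteq> S n \<and> (k \<le> card (S n) \<longrightarrow> card T = k)"
  proof
    fix n
    show "\<exists>T. T \<subseteq> S n \<and> (k \<le> card (S n) \<longrightarrow> card T = k)"
    proof (cases "k \<le> card (S n)")
      case True
      then obtain T where "T \<subseteq> S n" "card T = k"
        by (rule obtain_subset_with_card_n)
      then show ?thesis by blast
    qed auto
  qed
  then obtain T where "\<forall>n. T n \<subseteq> S n \<and> (k \<le> card (S n) \<longrightarrow> card (T n) = k)"
    using choice[OF ex_T] by (elim exE)
  then show thesis
    using that by blast
qed

text \<open>Each block meeting D keeps 2k free points; reserving k of them in H leaves k free points
  next to D \<inter> H (the unreserved ones) and next to D - H (the reserved ones).\<close>

lemma split_leaving_margins: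
  assumes "\<And>n. block n \<inter> D \<noteq> {} \<Longrightarrow> 2 * k \<le> card (block n - U)"
  obtains H where "leaves_margin k U (D \<inter> H)" "leaves_margin k U (D - H)"
proof -
  obtain T where T: "\<And>n. T n \<subseteq> block n - U" "\<And>n. k \<le> card (block n - U) \<Longrightarrow> card (T n) = k"
    by (rule obtain_subsets_with_card[of "\<lambda>n. block n - U" k]) blast
  define H where "H = (\<Union>n. T n)"
  have mem_H: "x \<in> H \<longleftrightarrow> x \<in> T n" if "x \<in> block n" for x n
  proof
    assume "x \<in> H"
    then obtain m where "x \<in> T m"
      by (auto simp: H_def)
    then have "m = n"
      using T(1)[of m] block_unique[OF _ that] by blast
    then show "x \<in> T n"
      using \<open>x \<in> T m\<close> by simp
  qed (auto simp: H_def)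
  have "leaves_margin k U (D \<inter> H)"
    unfolding leaves_margin_def
  proof (intro allI impI)
    fix n
    assume "block n \<inter> (D \<inter> H) \<noteq> {}"
    then have "2 * k \<le> card (block n - U)"
      using assms by blast
    moreover have "card ((block n - U) - T n) = card (block n - U) - card (T n)"
      using finite_subset[OF T(1) finite_Diff[OF finite_block]] T(1) by (rule card_Diff_subset)
    moreover have "(block n - U) - T n \<subseteq> block n - (D \<inter> H \<union> U)"
      using mem_H by blast
    then have "card ((block n - U) - T n) \<le> card (block n - (D \<inter> H \<union> U))"
      by (intro card_mono) auto
    ultimately show "k \<le> card (block n - (D \<inter> H \<union> U))"
      using T(2)[of n] by linarith
  qed
  moreover have "leaves_margin k U (D - H)"
    unfolding leaves_margin_def
  proof (intro allI impI)
    fix n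
    assume "block n \<inter> (D - H) \<noteq> {}"
    then have "2 * k \<le> card (block n - U)"
      using assms by blast
    then have "card (T n) = k"
      using T(2) by simp
    moreover have "T n \<subseteq> block n - (D - H \<union> U)"
      using T(1)[of n] mem_H by blast
    then have "card (T n) \<le> card (block n - (D - H \<union> U))"
      by (intro card_mono) auto
    ultimately show "k \<le> card (block n - (D - H \<union> U))"
      by simp
  qed
  ultimately show thesis
    by (rule that)
qed

lemma dense_piece_above:
  fixes f :: "nat \<Rightarrow> nat"
  assumes "f -` U \<in> Zideal" "\<And>G. finite G \<Longrightarrow> f -` G \<in> Zideal"
    and room: "\<forall>n'>n. 2 * k \<le> card (block n' - U)"
  obtains P where "piece_above U k n P" "\<exists>N\<ge>k. 1/4 \<le> dens (f -` P) N"
proof -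
  define W where "W = {..<(Suc n)\<^sup>2} \<union> U"
  have "f -` W \<in> Zideal"
    using assms(1,2) by (simp add: W_def Zideal_Un)
  then obtain N where N: "k \<le> N" "dens (f -` W) N < 1/2"
    using Zideal_ex_small_dens[of "f -` W" "1/2" k] by auto
  define D where "D = f ` {..<2 ^ N} - W"
  have "f -` D \<inter> {..<2 ^ N} = - (f -` W) \<inter> {..<2 ^ N}"
    by (auto simp: D_def)
  then have "dens (f -` D) N = dens (- (f -` W)) N"
    by (simp only: dens_def)
  then have dens_D: "dens (f -` D) N = 1 - dens (f -` W) N"
    by (simp add: dens_Compl)
  have dens_split: "dens (f -` D) N = dens (f -` (D \<inter> H)) N + dens (f -` (D - H)) N" for H
    by (subst dens_Un_disjoint[symmetric]) (auto intro: arg_cong[where f = "\<lambda>A. dens A N"])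
  have "2 * k \<le> card (block m - U)" if m: "block m \<inter> D \<noteq> {}" for m
  proof -
    obtain x where "x \<in> block m" "x \<in> D"
      using m by blast
    moreover from \<open>x \<in> D\<close> have "(Suc n)\<^sup>2 \<le> x"
      by (simp add: D_def W_def not_less)
    ultimately show ?thesis
      using room mem_block_lower[of x m "Suc n"] by simp
  qed
  then obtain H where margins: "leaves_margin k U (D \<inter> H)" "leaves_margin k U (D - H)"
    by (rule split_leaving_margins)
  have piece: "piece_above U k n P" if "P \<subseteq> D" "leaves_margin k U P" "1/4 \<le> dens (f -` P) N" for P
  proof -
    have "P \<noteq> {}"
      using that(3) by (cases "P = {}") (simp_all add: dens_def)
    moreover have "finite D"
      by (simp add: D_def)
    then have "finite P"
      using that(1) by (rule finite_subset[rotated])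
    ultimately show ?thesis
      using that(1,2) by (auto simp: piece_above_def D_def W_def)
  qed
  consider "1/4 \<le> dens (f -` (D \<inter> H)) N" | "1/4 \<le> dens (f -` (D - H)) N"
    using dens_D dens_split[of H] N(2) by linarith
  then show thesis
  proof cases
    case 1
    then show thesis
      using that piece[of "D \<inter> H"] margins(1) N(1) by blast
  next
    case 2
    then show thesis
      using that piece[of "D - H"] margins(2) N(1) by blast
  qed
qed

lemma exists_sparse_extension_dense:
  fixes f :: "nat \<Rightarrow> nat"
  assumes "mono U" "\<And>m. block_sparse (U m)" "\<And>m. f -` U m \<in> Zideal"
    and "\<And>G. finite G \<Longrightarrow> f -` G \<in> Zideal"
  obtains Y where "sparse_extension U Y" "f -` Y \<notin> Zideal"
proof -
  have pieces: "\<forall>\<^sub>F n in sequentially.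
      \<exists>P. piece_above (U k) k n P \<and> (\<exists>N\<ge>k. 1/4 \<le> dens (f -` P) N)" for k
  proof -
    have "\<forall>\<^sub>F n in sequentially. 2 * k \<le> card (block n - U k)"
      using assms(2) by (simp add: block_sparse_def)
    then have "\<forall>\<^sub>F n in sequentially. \<forall>n'\<ge>n. 2 * k \<le> card (block n' - U k)"
      by (rule eventually_all_ge_at_top)
    then show ?thesis
    proof eventually_elim
      case (elim n)
      then have "\<forall>n'>n. 2 * k \<le> card (block n' - U k)"
        by simp
      then show ?case
        using dense_piece_above[OF assms(3,4)] by metis
    qed
  qed
  obtain P :: "nat \<Rightarrow> nat set" where P: "sparse_extension U (\<Union>k. P k)"
    "\<And>k. \<exists>N\<ge>k. 1/4 \<le> dens (f -` P k) N"
    using exists_sparse_extension[OF assms(1,2) pieces] by blast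
  have "\<exists>\<^sub>F N in sequentially. 1/4 \<le> dens (f -` (\<Union>k. P k)) N"
    unfolding frequently_sequentially
  proof
    fix k
    obtain N where "N \<ge> k" "1/4 \<le> dens (f -` P k) N"
      using P(2) by blast
    moreover have "dens (f -` P k) N \<le> dens (f -` (\<Union>k. P k)) N"
      by (rule dens_mono) auto
    ultimately show "\<exists>N\<ge>k. 1/4 \<le> dens (f -` (\<Union>k. P k)) N"
      by force
  qed
  then have "f -` (\<Union>k. P k) \<notin> Zideal"
    by (rule not_in_Zideal_if_frequently_dens_ge[rotated]) simp
  then show thesis
    using that P(1) by blast
qed

lemma block_sparse_family_extend_inside:
  assumes "block_sparse_family C" "countable C" "infinite X" "\<And>A. A \<in> C \<Longrightarrow> finite (X \<inter> A)"
  shows "\<exists>Y. (Y \<subseteq> X \<and> infinite Y) \<and> block_sparse_family (insert Y C)"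
proof -
  obtain U where U: "exhausts U C"
    using countable_imp_exhausts[OF assms(2)] by blast
  have "mono U"
    using U by (simp add: exhausts_def)
  moreover have "block_sparse (U m)" for m
    using assms(1) U by (rule exhausts_block_sparse)
  moreover have "infinite (X - U m)" for m
    using U assms(3,4) by (rule exhausts_infinite_Diff)
  ultimately obtain Y where "sparse_extension U Y" "Y \<subseteq> X"
    by (rule exists_sparse_extension_inside)
  then show ?thesis
    using block_sparse_family_insert[OF assms(1) U] by (auto simp: sparse_extension_def)
qed

lemma block_sparse_family_extend_Katetov:
  fixes f :: "nat \<Rightarrow> nat"
  assumes "block_sparse_family C" "countable C" "\<And>A. A \<in> C \<Longrightarrow> f -` A \<in> Zideal"
  shows "\<exists>A. f -` A \<notin> Zideal \<and> block_sparse_family (insert A C)"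
proof -
  obtain U where U: "exhausts U C"
    using countable_imp_exhausts[OF assms(2)] by blast
  have U_mono: "mono U"
    using U by (simp add: exhausts_def)
  have U_sparse: "block_sparse (U m)" for m
    using assms(1) U by (rule exhausts_block_sparse)
  have U_Zideal: "f -` U m \<in> Zideal" for m
    using U assms(3) by (rule exhausts_vimage_Zideal)
  have "\<exists>A. sparse_extension U A \<and> f -` A \<notin> Zideal"
  proof (cases "\<forall>G. finite G \<longrightarrow> f -` G \<in> Zideal")
    case True
    then show ?thesis
      using exists_sparse_extension_dense[OF U_mono U_sparse U_Zideal] by blast
  next
    case False
    then obtain G where G: "finite G" "f -` G \<notin> Zideal"
      by blast
    have "f -` G = (\<Union>p\<in>G. f -` {p})"
      by blast
    then obtain p where p: "f -` {p} \<notin> Zideal"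
      using G Zideal_UN[of G "\<lambda>p. f -` {p}"] by auto
    have "infinite (UNIV - U m)" for m
      using infinite_Compl_if_block_sparse[OF U_sparse] by (simp add: Compl_eq_Diff_UNIV)
    then obtain Y where "sparse_extension U Y"
      using exists_sparse_extension_inside[OF U_mono U_sparse] by blast
    then have "sparse_extension U (Y \<union> {p})"
      by (rule sparse_extension_Un_finite) simp
    moreover have "f -` (Y \<union> {p}) \<notin> Zideal"
      using p Zideal_subset[of "f -` (Y \<union> {p})" "f -` {p}"] by auto
    ultimately show ?thesis
      by blast
  qed
  then show ?thesis
    using block_sparse_family_insert[OF assms(1) U] by blast
qed

section \<open>Consequences of block-sparseness\<close>

lemma fin_positive_blocks:
  assumes "block_sparse_family \<A>"
  shows "fin_positive (gen_ideal \<A>) (range block)"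
  unfolding fin_positive_def
proof (intro conjI ballI)
  fix X
  assume "X \<in> gen_ideal \<A>"
  then obtain F where F: "finite F" "F \<subseteq> \<A>" "finite (X - \<Union>F)"
    unfolding gen_ideal_def by blast
  then have "infinite {n. block n \<inter> \<Union>F = {}}"
    using assms by (simp add: block_sparse_family_def block_sparse_def)
  then have "infinite ({n. block n \<inter> \<Union>F = {}} - {n. block n \<inter> (X - \<Union>F) \<noteq> {}})"
    using finite_blocks_meeting[OF F(3)] by (rule Diff_infinite_finite[rotated])
  then obtain n where "n \<in> {n. block n \<inter> \<Union>F = {}} - {n. block n \<inter> (X - \<Union>F) \<noteq> {}}"
    by (metis ex_in_conv infinite_imp_nonempty)
  then have "X \<inter> block n = {}"
    by auto
  then show "\<exists>s\<in>range block. X \<inter> s = {}"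
    by (intro bexI[OF _ rangeI])
qed (auto simp: block_nonempty)

lemma Union_blocks_notin_gen_ideal:
  assumes "block_sparse_family \<A>" "infinite W"
  shows "(\<Union>n\<in>W. block n) \<notin> gen_ideal \<A>"
proof
  assume "(\<Union>n\<in>W. block n) \<in> gen_ideal \<A>"
  then obtain F where F: "finite F" "F \<subseteq> \<A>" "finite ((\<Union>n\<in>W. block n) - \<Union>F)"
    unfolding gen_ideal_def by blast
  define E where "E = (\<Union>n\<in>W. block n) - \<Union>F"
  have "\<forall>\<^sub>F n in sequentially. 1 \<le> card (block n - \<Union>F)"
    using assms(1) F(1,2) by (simp add: block_sparse_family_def block_sparse_def)
  moreover have "\<forall>\<^sub>F n in sequentially. block n \<inter> E = {}"
    using finite_blocks_meeting[of E] F(3)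
    by (simp add: E_def eventually_cofinite[symmetric] cofinite_eq_sequentially)
  ultimately have "\<forall>\<^sub>F n in sequentially. 1 \<le> card (block n - \<Union>F) \<and> block n \<inter> E = {}"
    by (rule eventually_conj)
  moreover have "\<exists>\<^sub>F n in sequentially. n \<in> W"
    using assms(2) by (simp add: frequently_cofinite cofinite_eq_sequentially[symmetric])
  ultimately have "\<exists>\<^sub>F n in sequentially. (1 \<le> card (block n - \<Union>F) \<and> block n \<inter> E = {}) \<and> n \<in> W"
    by (intro frequently_eventually_conj)
  then obtain n where n: "1 \<le> card (block n - \<Union>F)" "block n \<inter> E = {}" "n \<in> W"
    by (auto dest: frequently_ex)
  then have "block n - \<Union>F \<noteq> {}"
    by (metis card.empty not_one_le_zero)
  then show False
    using n(2,3) by (auto simp: E_def)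
qed

lemma not_SS_block_if_block_sparse_family:
  assumes "block_sparse_family \<A>"
  shows "\<not> SS_block \<A>"
proof
  assume "SS_block \<A>"
  then obtain W where "infinite W" "(\<Union>n\<in>W. block n) \<in> gen_ideal \<A>"
    using block_sequence_block fin_positive_blocks[OF assms] unfolding SS_block_def by blast
  then show False
    using Union_blocks_notin_gen_ideal[OF assms] by blast
qed

lemma MAD_if_meets_all:
  assumes "almost_disjoint_family \<A>" "\<And>X. infinite X \<Longrightarrow> \<exists>A\<in>\<A>. infinite (X \<inter> A)"
  shows "MAD \<A>"
  unfolding MAD_def
proof (intro conjI allI impI assms(1))
  fix \<B>
  assume \<B>: "almost_disjoint_family \<B> \<and> \<A> \<subseteq> \<B>"
  have "X \<in> \<A>" if X: "X \<in> \<B>" for X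
  proof -
    have "infinite X"
      using \<B> X by (simp add: almost_disjoint_family_def)
    then obtain A where A: "A \<in> \<A>" "infinite (X \<inter> A)"
      using assms(2) by blast
    have "\<forall>Y\<in>\<B>. X \<noteq> Y \<longrightarrow> finite (X \<inter> Y)"
      using \<B> X by (simp add: almost_disjoint_family_def)
    then have "X = A"
      using A \<B> by blast
    then show ?thesis
      using A(1) by simp
  qed
  then show "\<B> = \<A>"
    using \<B> by blast
qed

lemma not_katetov_le_Zideal:
  assumes "\<And>f. \<exists>A\<in>\<A>. f -` A \<notin> Zideal"
  shows "\<not> katetov_le (gen_ideal \<A>) Zideal"
proof -
  have "A \<in> gen_ideal \<A>" if "A \<in> \<A>" for A
    using that unfolding gen_ideal_def by (intro CollectI exI[of _ "{A}"]) auto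
  then show ?thesis
    using assms unfolding katetov_le_def by blast
qed

section \<open>The construction under CH\<close>

lemma CH_imp_countable_segments_wellorder:
  assumes CH
  obtains R :: "nat set rel" where "wf R" "\<And>a b. a \<noteq> b \<Longrightarrow> (a, b) \<in> R \<or> (b, a) \<in> R"
    "\<And>b. countable {a. (a, b) \<in> R}"
proof -
  obtain r :: "nat set rel" where r: "well_order_on UNIV r"
    using well_order_on by blast
  define s where "s = r - Id"
  have wf_s: "wf s"
    using r unfolding s_def well_order_on_def by blast
  have total_s: "(a, b) \<in> s \<or> (b, a) \<in> s" if "a \<noteq> b" for a b
    using r that unfolding s_def well_order_on_def linear_order_on_def total_on_def by blast
  show thesis
  proof (cases "\<forall>t. countable {a. (a, t) \<in> s}")
    case True
    then show thesis
      using that wf_s total_s by blast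
  next
    case False
    then obtain t where "t \<in> {t. \<not> countable {a. (a, t) \<in> s}}"
      by blast
    then obtain t0 where "t0 \<in> {t. \<not> countable {a. (a, t) \<in> s}}"
      and "\<And>y. (y, t0) \<in> s \<Longrightarrow> y \<notin> {t. \<not> countable {a. (a, t) \<in> s}}"
      by (erule wfE_min[OF wf_s])
    then have t0: "\<not> countable {a. (a, t0) \<in> s}"
      and least: "\<And>y. (y, t0) \<in> s \<Longrightarrow> countable {a. (a, y) \<in> s}"
      by auto
    text \<open>By CH the initial segment below t0 has the size of the continuum; pulling the
      order back along a bijection gives an order on the index type with countable segments.\<close>
    define S where "S = {a. (a, t0) \<in> s}"
    have "S \<approx> (UNIV :: nat set set)"
      using assms t0 unfolding CH_def S_def by blast
    then obtain \<phi> where "bij_betw \<phi> S (UNIV :: nat set set)"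
      unfolding eqpoll_def by blast
    then have "bij_betw (inv_into S \<phi>) UNIV S"
      by (rule bij_betw_inv_into)
    then have inj_e: "inj (inv_into S \<phi>)" and e_S: "\<And>x. inv_into S \<phi> x \<in> S"
      unfolding bij_betw_def by auto
    define R where "R = inv_image s (inv_into S \<phi>)"
    have "wf R"
      unfolding R_def using wf_s by (rule wf_inv_image)
    moreover have "(a, b) \<in> R \<or> (b, a) \<in> R" if "a \<noteq> b" for a b
    proof -
      have "inv_into S \<phi> a \<noteq> inv_into S \<phi> b"
        using inj_e that by (auto dest: injD)
      then show ?thesis
        using total_s unfolding R_def inv_image_def by blast
    qed
    moreover have "countable {a. (a, b) \<in> R}" for b
    proof -
      have "inv_into S \<phi> ` {a. (a, b) \<in> R} \<subseteq> {z. (z, inv_into S \<phi> b) \<in> s}"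
        unfolding R_def by auto
      moreover have "countable {z. (z, inv_into S \<phi> b) \<in> s}"
        using least e_S[of b] unfolding S_def by blast
      ultimately have "countable (inv_into S \<phi> ` {a. (a, b) \<in> R})"
        by (rule countable_subset)
      then show ?thesis
        using inj_e by (meson countable_image_inj_on inj_on_subset subset_UNIV)
    qed
    ultimately show thesis
      using that by blast
  qed
qed

lemma transfinite_union_closure:
  fixes R :: "'a rel" and step :: "'b set \<Rightarrow> 'a \<Rightarrow> 'b set" and P :: "'b set \<Rightarrow> bool"
  assumes wf: "wf R" and total: "\<And>a b. a \<noteq> b \<Longrightarrow> (a, b) \<in> R \<or> (b, a) \<in> R"
    and segments: "\<And>b. countable {a. (a, b) \<in> R}"
    and extends: "\<And>C t. C \<subseteq> step C t"
    and preserves: "\<And>C t. P C \<Longrightarrow> countable C \<Longrightarrow> P (step C t) \<and> countable (step C t)"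
    and chains: "\<And>\<C>. chain\<^sub>\<subseteq> \<C> \<Longrightarrow> (\<And>C. C \<in> \<C> \<Longrightarrow> P C) \<Longrightarrow> P (\<Union>\<C>)"
  shows "\<exists>\<A>. P \<A> \<and> (\<forall>t. \<exists>C. P C \<and> countable C \<and> step C t \<subseteq> \<A>)"
proof -
  define G where "G = wfrec R (\<lambda>G t. step (\<Union>y\<in>{y. (y, t) \<in> R}. G y) t)"
  define below where "below t = (\<Union>y\<in>{y. (y, t) \<in> R}. G y)" for t
  have G_eq: "G t = step (below t) t" for t
    unfolding G_def below_def by (subst wfrec[OF wf]) (simp add: cut_apply)
  have G_mono: "G y \<subseteq> G z" if "(y, z) \<in> R" for y z
  proof -
    have "G y \<subseteq> below z"
      using that unfolding below_def by blast
    also have "below z \<subseteq> G z"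
      unfolding G_eq[of z] by (rule extends)
    finally show ?thesis .
  qed
  have chain: "chain\<^sub>\<subseteq> (G ` T)" for T
    unfolding chain_subset_def
  proof (intro ballI)
    fix A B
    assume "A \<in> G ` T" "B \<in> G ` T"
    then obtain y z where "A = G y" "B = G z"
      by blast
    then show "A \<subseteq> B \<or> B \<subseteq> A"
      using total[of y z] G_mono by (cases "y = z") auto
  qed
  have below_ok: "P (below t) \<and> countable (below t)"
    if "\<And>y. (y, t) \<in> R \<Longrightarrow> P (G y) \<and> countable (G y)" for t
  proof
    show "P (below t)"
      unfolding below_def using that by (intro chains[OF chain]) auto
    show "countable (below t)"
      unfolding below_def using that segments by (intro countable_UN) auto
  qed
  have G_ok: "P (G t) \<and> countable (G t)" for t
    using wf
  proof (induction t rule: wf_induct_rule)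
    case (less t)
    then have "P (below t) \<and> countable (below t)"
      by (rule below_ok)
    then show ?case
      unfolding G_eq[of t] using preserves by blast
  qed
  show ?thesis
  proof (rule exI[of _ "\<Union>(range G)"], intro conjI allI)
    show "P (\<Union>(range G))"
      using chains[OF chain] G_ok by blast
    show "\<exists>C. P C \<and> countable C \<and> step C t \<subseteq> \<Union>(range G)" for t
    proof (rule exI[of _ "below t"], intro conjI)
      show "P (below t)" "countable (below t)"
        using below_ok G_ok by blast+
      show "step (below t) t \<subseteq> \<Union>(range G)"
        unfolding G_eq[symmetric] by blast
    qed
  qed
qed

definition extend_by :: "(nat set \<Rightarrow> bool) \<Rightarrow> nat set set \<Rightarrow> nat set set" where
  "extend_by Q C = (if \<exists>Y. Q Y \<and> block_sparse_family (insert Y C)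
     then insert (SOME Y. Q Y \<and> block_sparse_family (insert Y C)) C else C)"

lemma subset_extend_by: "C \<subseteq> extend_by Q C"
  by (auto simp: extend_by_def)

lemma countable_extend_by: "countable C \<Longrightarrow> countable (extend_by Q C)"
  by (simp add: extend_by_def)

lemma block_sparse_family_extend_by:
  "block_sparse_family C \<Longrightarrow> block_sparse_family (extend_by Q C)"
  unfolding extend_by_def by (auto intro: someI2_ex)

lemma extend_by_witness:
  assumes "\<exists>Y. Q Y \<and> block_sparse_family (insert Y C)"
  shows "\<exists>Y\<in>extend_by Q C. Q Y"
  using someI_ex[OF assms] assms unfolding extend_by_def by auto

lemma extend_by_inside_meets:
  assumes "block_sparse_family C" "countable C" "infinite X"
  shows "\<exists>A\<in>extend_by (\<lambda>Y. Y \<subseteq> X \<and> infinite Y) C. infinite (X \<inter> A)"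
proof (cases "\<exists>A\<in>C. infinite (X \<inter> A)")
  case True
  then show ?thesis
    using subset_extend_by by blast
next
  case False
  then have "\<exists>Y. (Y \<subseteq> X \<and> infinite Y) \<and> block_sparse_family (insert Y C)"
    by (intro block_sparse_family_extend_inside[OF assms]) auto
  then obtain Y where "Y \<in> extend_by (\<lambda>Y. Y \<subseteq> X \<and> infinite Y) C" "Y \<subseteq> X" "infinite Y"
    using extend_by_witness[of "\<lambda>Y. Y \<subseteq> X \<and> infinite Y"] by blast
  moreover from \<open>Y \<subseteq> X\<close> have "X \<inter> Y = Y"
    by blast
  ultimately show ?thesis
    by (intro bexI[where x = Y]) simp_all
qed

lemma extend_by_Katetov:
  fixes f :: "nat \<Rightarrow> nat"
  assumes "block_sparse_family C" "countable C"
  shows "\<exists>A\<in>extend_by (\<lambda>A. f -` A \<notin> Zideal) C. f -` A \<notin> Zideal"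
proof (cases "\<exists>A\<in>C. f -` A \<notin> Zideal")
  case True
  then show ?thesis
    using subset_extend_by by blast
next
  case False
  then have "\<exists>A. f -` A \<notin> Zideal \<and> block_sparse_family (insert A C)"
    by (intro block_sparse_family_extend_Katetov[OF assms]) auto
  then show ?thesis
    using extend_by_witness[of "\<lambda>A. f -` A \<notin> Zideal"] by blast
qed

definition graph_code :: "(nat \<Rightarrow> nat) \<Rightarrow> nat set" where
  "graph_code f = range (\<lambda>n. prod_encode (n, f n))"

lemma inj_graph_code: "inj graph_code"
proof (rule injI)
  fix f g
  assume eq: "graph_code f = graph_code g"
  have "f n = g n" for n
  proof -
    have "prod_encode (n, f n) \<in> graph_code g"
      using eq by (auto simp: graph_code_def)
    then obtain m where "prod_encode (n, f n) = prod_encode (m, g m)"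
      by (auto simp: graph_code_def)
    then show ?thesis
      by auto
  qed
  then show "f = g" ..
qed

text \<open>Stage t serves the candidate t for MADness and the function coded by t.\<close>

definition stage :: "nat set set \<Rightarrow> nat set \<Rightarrow> nat set set" where
  "stage C t = extend_by (\<lambda>A. inv graph_code t -` A \<notin> Zideal)
     (extend_by (\<lambda>Y. Y \<subseteq> t \<and> infinite Y) C)"

lemma subset_stage: "C \<subseteq> stage C t"
  unfolding stage_def by (rule subset_trans[OF subset_extend_by subset_extend_by])

lemma block_sparse_family_stage:
  "block_sparse_family C \<Longrightarrow> countable C \<Longrightarrow>
    block_sparse_family (stage C t) \<and> countable (stage C t)"
  by (simp add: stage_def block_sparse_family_extend_by countable_extend_by)

lemma stage_meets:
  assumes "block_sparse_family C" "countable C" "infinite X"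
  shows "\<exists>A\<in>stage C X. infinite (X \<inter> A)"
  using extend_by_inside_meets[OF assms] subset_extend_by unfolding stage_def by blast

lemma stage_Katetov:
  fixes f :: "nat \<Rightarrow> nat"
  assumes "block_sparse_family C" "countable C"
  shows "\<exists>A\<in>stage C (graph_code f). f -` A \<notin> Zideal"
proof -
  define C' where "C' = extend_by (\<lambda>Y. Y \<subseteq> graph_code f \<and> infinite Y) C"
  have "block_sparse_family C'" "countable C'"
    using assms by (simp_all add: C'_def block_sparse_family_extend_by countable_extend_by)
  then have "\<exists>A\<in>extend_by (\<lambda>A. f -` A \<notin> Zideal) C'. f -` A \<notin> Zideal"
    by (rule extend_by_Katetov)
  then show ?thesis
    by (simp add: stage_def C'_def inv_f_f[OF inj_graph_code])
qed

lemma CH_imp_block_sparse_family_meeting_all: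
  assumes CH
  obtains \<A> where "block_sparse_family \<A>" "\<And>X. infinite X \<Longrightarrow> \<exists>A\<in>\<A>. infinite (X \<inter> A)"
    "\<And>f. \<exists>A\<in>\<A>. f -` A \<notin> Zideal"
proof -
  obtain R :: "nat set rel" where R: "wf R" "\<And>a b. a \<noteq> b \<Longrightarrow> (a, b) \<in> R \<or> (b, a) \<in> R"
    "\<And>b. countable {a. (a, b) \<in> R}"
    using CH_imp_countable_segments_wellorder[OF assms] by blast
  obtain \<A> where \<A>: "block_sparse_family \<A>"
    "\<And>t. \<exists>C. block_sparse_family C \<and> countable C \<and> stage C t \<subseteq> \<A>"
    using transfinite_union_closure[of R stage block_sparse_family,
        OF R subset_stage block_sparse_family_stage block_sparse_family_Union_chain]
    by blast
  show thesis
  proof (rule that[OF \<A>(1)])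
    show "\<exists>A\<in>\<A>. infinite (X \<inter> A)" if "infinite X" for X
      using \<A>(2)[of X] stage_meets[OF _ _ that] by blast
    show "\<exists>A\<in>\<A>. f -` A \<notin> Zideal" for f
      using \<A>(2)[of "graph_code f"] stage_Katetov[of _ f] by blast
  qed
qed

theorem mainTheorem17:
  assumes "CH"
  shows "\<exists>\<A>. MAD \<A> \<and> \<not> katetov_le (gen_ideal \<A>) Zideal \<and> \<not> SS_block \<A>"
proof -
  obtain \<A> where \<A>: "block_sparse_family \<A>" "\<And>X. infinite X \<Longrightarrow> \<exists>A\<in>\<A>. infinite (X \<inter> A)"
    "\<And>f. \<exists>A\<in>\<A>. f -` A \<notin> Zideal"
    using CH_imp_block_sparse_family_meeting_all[OF assms] by blast
  have "MAD \<A>"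
    using \<A>(1,2) by (intro MAD_if_meets_all) (simp_all add: block_sparse_family_def)
  moreover have "\<not> katetov_le (gen_ideal \<A>) Zideal"
    using \<A>(3) by (rule not_katetov_le_Zideal)
  moreover have "\<not> SS_block \<A>"
    using \<A>(1) by (rule not_SS_block_if_block_sparse_family)
  ultimately show ?thesis
    by blast
qed

end
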